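(* Let $m\ge 3$, let $K\ne\Delta_{[m]}$ be a simplicial complex on $[m]$ with $\{m\}\in K$, and let $L=K\cap 2^{[m-1]}$, regarded as a simplicial complex on $[m-1]$, with $L\ne\Delta_{[m-1]}$. Then $K$ is the cone over $L$ with apex $m$ (i.e. $K=\{\sigma,\sigma\cup\{m\}:\sigma\in L\}$) if and only if $$\mathrm{Bier}(L)=\mathrm{Bier}(K)\cap 2^{[m-1]\sqcup[(m-1)']},$$ where $\mathrm{Bier}(L)$ is formed using the Alexander dual of $L$ on $[(m-1)']$.
   Context: A simplicial complex $K$ on $[m]=\{1,\dots,m\}$ is a nonempty family of subsets of $[m]$ closed under taking subsets. $\Delta_{[n]}=2^{[n]}$. Let $[n']=\{1',\dots,n'\}$ be a disjoint copy of $[n]$, $I'=\{i':i\in I\}$. For a complex $K\ne\Delta_{[n]}$ on $[n]$ the Alexander dual $K^\vee$ is the complex on $[n']$ with $J'\in K^\vee$ iff $[n]\setminus J\notin K$. The Bier sphere $\mathrm{Bier}(K)$ is the complex on $[n]\sqcup[n']$ with faces $I\sqcup J'$, $I\in K$, $J'\in K^\vee$, $I\cap J=\varnothing$. *)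

theory Defs
  imports Main
begin

text \<open>Vertex set [n] is {1..n}. The disjoint union [n] \<sqcup> [n'] is modelled in the sum type
  nat + nat: Inl i stands for i and Inr i stands for i'.\<close>

definition simplicial_complex :: "nat \<Rightarrow> nat set set \<Rightarrow> bool" where
  "simplicial_complex m K \<longleftrightarrow> K \<noteq> {} \<and> (\<forall>\<sigma>\<in>K. \<sigma> \<subseteq> {1..m}) \<and>
     (\<forall>\<sigma>\<in>K. \<forall>\<tau>. \<tau> \<subseteq> \<sigma> \<longrightarrow> \<tau> \<in> K)"

definition full_simplex :: "nat \<Rightarrow> nat set set" where
  "full_simplex n = Pow {1..n}"

definition alexander_dual :: "nat \<Rightarrow> nat set set \<Rightarrow> (nat + nat) set set" where
  "alexander_dual n K = {Inr ` J | J. J \<subseteq> {1..n} \<and> {1..n} - J \<notin> K}"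

definition bier :: "nat \<Rightarrow> nat set set \<Rightarrow> (nat + nat) set set" where
  "bier n K = {Inl ` I \<union> Inr ` J | I J. I \<in> K \<and> Inr ` J \<in> alexander_dual n K \<and> I \<inter> J = {}}"

definition cone :: "nat \<Rightarrow> nat set set \<Rightarrow> nat set set" where
  "cone v L = L \<union> {insert v \<sigma> | \<sigma>. \<sigma> \<in> L}"

end

theory Submission
  imports Defs
begin

text \<open>Both sides say that adding the apex m to a face of K gives a face of K. The two Bier spheres can only differ in their Alexander duals, and J' is a face
  of the dual of L iff [m-1] - J \<notin> L, of the dual of K iff [m] - J = ([m-1] - J) \<union> {m} \<notin> K.\<close>

lemma simplicial_complex_downward_closed:
  "simplicial_complex m K \<Longrightarrow> \<sigma> \<in> K \<Longrightarrow> \<tau> \<subseteq> \<sigma> \<Longrightarrow> \<tau> \<in> K"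
  unfolding simplicial_complex_def by blast

lemma simplicial_complex_face_subset:
  "simplicial_complex m K \<Longrightarrow> \<sigma> \<in> K \<Longrightarrow> \<sigma> \<subseteq> {1..m}"
  unfolding simplicial_complex_def by blast

lemma simplicial_complex_empty_mem:
  "simplicial_complex m K \<Longrightarrow> {} \<in> K"
  unfolding simplicial_complex_def by blast

lemma Inl_Inr_image_eq_iff:
  "(Inl ` I \<union> Inr ` J :: ('a + 'b) set) = Inl ` I' \<union> Inr ` J' \<longleftrightarrow> I = I' \<and> J = J'"
proof
  assume e: "(Inl ` I \<union> Inr ` J :: ('a + 'b) set) = Inl ` I' \<union> Inr ` J'"
  have "I = Inl -` (Inl ` I \<union> Inr ` J :: ('a + 'b) set)" "J = Inr -` (Inl ` I \<union> Inr ` J :: ('a + 'b) set)"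
    "I' = Inl -` (Inl ` I' \<union> Inr ` J' :: ('a + 'b) set)" "J' = Inr -` (Inl ` I' \<union> Inr ` J' :: ('a + 'b) set)"
    by auto
  with e show "I = I' \<and> J = J'" by metis
qed simp

lemma mem_bier_iff:
  "Inl ` I \<union> Inr ` J \<in> bier n K \<longleftrightarrow> I \<in> K \<and> J \<subseteq> {1..n} \<and> {1..n} - J \<notin> K \<and> I \<inter> J = {}"
  unfolding bier_def alexander_dual_def
  by (auto simp: Inl_Inr_image_eq_iff inj_image_eq_iff)

lemma bierE:
  assumes "x \<in> bier n K"
  obtains I J where "x = Inl ` I \<union> Inr ` J"
  using assms unfolding bier_def by blast

lemma cone_iff_insert_apex_closed:
  assumes "simplicial_complex (Suc n) K"
  shows "K = cone (Suc n) (K \<inter> Pow {1..n}) \<longleftrightarrow> (\<forall>\<sigma>\<in>K. insert (Suc n) \<sigma> \<in> K)"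
proof
  assume K: "K = cone (Suc n) (K \<inter> Pow {1..n})"
  show "\<forall>\<sigma>\<in>K. insert (Suc n) \<sigma> \<in> K"
  proof
    fix \<sigma> assume "\<sigma> \<in> K"
    then have "\<sigma> \<in> cone (Suc n) (K \<inter> Pow {1..n})" using K by simp
    then have "insert (Suc n) \<sigma> \<in> cone (Suc n) (K \<inter> Pow {1..n})"
      unfolding cone_def by auto
    then show "insert (Suc n) \<sigma> \<in> K" using K by simp
  qed
next
  assume closed: "\<forall>\<sigma>\<in>K. insert (Suc n) \<sigma> \<in> K"
  have "\<sigma> \<in> cone (Suc n) (K \<inter> Pow {1..n})" if "\<sigma> \<in> K" for \<sigma>
  proof -
    have base: "\<sigma> - {Suc n} \<in> K \<inter> Pow {1..n}"
      using simplicial_complex_downward_closed[OF assms that]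
        simplicial_complex_face_subset[OF assms that] by auto
    show ?thesis
    proof (cases "Suc n \<in> \<sigma>")
      case True
      then have "\<sigma> = insert (Suc n) (\<sigma> - {Suc n})" by auto
      with base show ?thesis unfolding cone_def by blast
    next
      case False
      with base show ?thesis unfolding cone_def by simp
    qed
  qed
  moreover have "cone (Suc n) (K \<inter> Pow {1..n}) \<subseteq> K"
    using closed unfolding cone_def by auto
  ultimately show "K = cone (Suc n) (K \<inter> Pow {1..n})" by blast
qed

lemma bier_restriction_iff_complements:
  assumes "{} \<in> K"
  shows "bier n (K \<inter> Pow {1..n}) = bier (Suc n) K \<inter> Pow (Inl ` {1..n} \<union> Inr ` {1..n}) \<longleftrightarrow>
         (\<forall>J\<subseteq>{1..n}. {1..n} - J \<in> K \<inter> Pow {1..n} \<longleftrightarrow> {1..Suc n} - J \<in> K)"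
proof
  assume eq: "bier n (K \<inter> Pow {1..n}) = bier (Suc n) K \<inter> Pow (Inl ` {1..n} \<union> Inr ` {1..n})"
  show "\<forall>J\<subseteq>{1..n}. {1..n} - J \<in> K \<inter> Pow {1..n} \<longleftrightarrow> {1..Suc n} - J \<in> K"
  proof (intro allI impI)
    fix J :: "nat set" assume J: "J \<subseteq> {1..n}"
    have "Inl ` {} \<union> Inr ` J \<in> bier n (K \<inter> Pow {1..n}) \<longleftrightarrow> Inl ` {} \<union> Inr ` J \<in> bier (Suc n) K"
      using J by (subst eq) auto
    then show "{1..n} - J \<in> K \<inter> Pow {1..n} \<longleftrightarrow> {1..Suc n} - J \<in> K"
      using J \<open>{} \<in> K\<close> unfolding mem_bier_iff by auto
  qed
next
  assume compl: "\<forall>J\<subseteq>{1..n}. {1..n} - J \<in> K \<inter> Pow {1..n} \<longleftrightarrow> {1..Suc n} - J \<in> K"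
  show "bier n (K \<inter> Pow {1..n}) = bier (Suc n) K \<inter> Pow (Inl ` {1..n} \<union> Inr ` {1..n})"
  proof (intro equalityI subsetI)
    fix x assume x: "x \<in> bier n (K \<inter> Pow {1..n})"
    then obtain I J where x_eq: "x = Inl ` I \<union> Inr ` J" by (rule bierE)
    with x have "I \<in> K" "I \<subseteq> {1..n}" "J \<subseteq> {1..n}" "{1..n} - J \<notin> K \<inter> Pow {1..n}" "I \<inter> J = {}"
      by (simp_all add: mem_bier_iff)
    moreover from compl \<open>J \<subseteq> {1..n}\<close> \<open>{1..n} - J \<notin> K \<inter> Pow {1..n}\<close>
    have "{1..Suc n} - J \<notin> K" by blast
    moreover have "J \<subseteq> {1..Suc n}" using \<open>J \<subseteq> {1..n}\<close> by auto
    ultimately show "x \<in> bier (Suc n) K \<inter> Pow (Inl ` {1..n} \<union> Inr ` {1..n})"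
      unfolding x_eq Int_iff mem_bier_iff by auto
  next
    fix x assume x: "x \<in> bier (Suc n) K \<inter> Pow (Inl ` {1..n} \<union> Inr ` {1..n})"
    then obtain I J where x_eq: "x = Inl ` I \<union> Inr ` J" by (blast elim: bierE)
    with x have "I \<in> K" "{1..Suc n} - J \<notin> K" "I \<inter> J = {}"
      and "I \<subseteq> {1..n}" "J \<subseteq> {1..n}"
      by (auto simp: mem_bier_iff)
    moreover from compl \<open>J \<subseteq> {1..n}\<close> \<open>{1..Suc n} - J \<notin> K\<close>
    have "{1..n} - J \<notin> K \<inter> Pow {1..n}" by blast
    ultimately show "x \<in> bier n (K \<inter> Pow {1..n})"
      unfolding x_eq Int_iff mem_bier_iff by auto
  qed
qed

lemma complements_iff_insert_apex_closed:
  assumes "simplicial_complex (Suc n) K"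
  shows "(\<forall>J\<subseteq>{1..n}. {1..n} - J \<in> K \<inter> Pow {1..n} \<longleftrightarrow> {1..Suc n} - J \<in> K) \<longleftrightarrow>
         (\<forall>\<sigma>\<in>K. insert (Suc n) \<sigma> \<in> K)"
proof -
  have compl_Suc: "{1..Suc n} - J = insert (Suc n) ({1..n} - J)" if "J \<subseteq> {1..n}" for J
    using that by auto
  show ?thesis
  proof
    assume compl: "\<forall>J\<subseteq>{1..n}. {1..n} - J \<in> K \<inter> Pow {1..n} \<longleftrightarrow> {1..Suc n} - J \<in> K"
    show "\<forall>\<sigma>\<in>K. insert (Suc n) \<sigma> \<in> K"
    proof
      fix \<sigma> assume "\<sigma> \<in> K"
      define J where "J = {1..n} - \<sigma>"
      have "J \<subseteq> {1..n}" "{1..n} - J = \<sigma> - {Suc n}"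
        using simplicial_complex_face_subset[OF assms \<open>\<sigma> \<in> K\<close>] by (auto simp: J_def)
      moreover have "\<sigma> - {Suc n} \<in> K"
        using simplicial_complex_downward_closed[OF assms \<open>\<sigma> \<in> K\<close>] by blast
      ultimately have "{1..Suc n} - J \<in> K" using compl by auto
      then show "insert (Suc n) \<sigma> \<in> K"
        using compl_Suc[OF \<open>J \<subseteq> {1..n}\<close>] \<open>{1..n} - J = \<sigma> - {Suc n}\<close> by simp
    qed
  next
    assume closed: "\<forall>\<sigma>\<in>K. insert (Suc n) \<sigma> \<in> K"
    show "\<forall>J\<subseteq>{1..n}. {1..n} - J \<in> K \<inter> Pow {1..n} \<longleftrightarrow> {1..Suc n} - J \<in> K"
    proof (intro allI impI)
      fix J :: "nat set" assume "J \<subseteq> {1..n}"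
      have "{1..n} - J \<in> K \<longleftrightarrow> insert (Suc n) ({1..n} - J) \<in> K"
        using closed simplicial_complex_downward_closed[OF assms, of "insert (Suc n) ({1..n} - J)"]
        by blast
      then show "{1..n} - J \<in> K \<inter> Pow {1..n} \<longleftrightarrow> {1..Suc n} - J \<in> K"
        using compl_Suc[OF \<open>J \<subseteq> {1..n}\<close>] by simp
    qed
  qed
qed

theorem mainTheorem6:
  fixes m :: nat and K :: "nat set set"
  assumes "m \<ge> 3"
    and "simplicial_complex m K"
    and "K \<noteq> full_simplex m"
    and "{m} \<in> K"
    and "K \<inter> Pow {1..m-1} \<noteq> full_simplex (m-1)"
  shows "K = cone m (K \<inter> Pow {1..m-1}) \<longleftrightarrow>
         bier (m-1) (K \<inter> Pow {1..m-1}) =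
           bier m K \<inter> Pow (Inl ` {1..m-1} \<union> Inr ` {1..m-1})"
proof -
  obtain n where m: "m = Suc n" using \<open>m \<ge> 3\<close> by (metis Suc_le_D numeral_3_eq_3)
  have K: "simplicial_complex (Suc n) K" using assms(2) m by simp
  show ?thesis
    unfolding m diff_Suc_1
    using cone_iff_insert_apex_closed[OF K]
      bier_restriction_iff_complements[OF simplicial_complex_empty_mem[OF K]]
      complements_iff_insert_apex_closed[OF K]
    by simp
qed

end
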